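(* Let $X\in\mathbb R^{n\times p}$ have unit $\ell_2$-norm columns and coherence $\mu$. Let $T_0\subset\{1,\dots,p\}$ with $|T_0|=s_0$, let $\lambda_1\ge\dots\ge\lambda_{s_0}$ be the $s_0$ largest eigenvalues of $X_{T_0}X_{T_0}^t$, and let $\tilde\lambda_1\ge\lambda_1$, $\tilde\lambda_{s_0}\le\lambda_{s_0}$. Let $T_1\subset\{1,\dots,p\}$ with $|T_1|=s_1=3s_0$ and $T_0\cap T_1=\emptyset$, and let $\eta=\tfrac12$. Set $$ \varepsilon_{\min}=\frac14\cdot\frac{s_0^3\mu^2/4+s_0^{3/2}\mu}{1-s_0\mu^2-\tfrac12},\qquad \varepsilon_{\max}=\frac14\cdot\frac{144\,s_0^4\mu^2+32\,s_0^{3/2}\mu(2-\eta)^2}{\tilde\lambda_1-1}. $$ Assume (1) $1-(s_0+s_1)\mu>\tilde\lambda_{s_0}>\eta$; (2) $1<\tilde\lambda_1<2-\eta$; (3) $s_1<\min\left(\frac{\tilde\lambda_{s_0}-\eta}{\varepsilon_{\min}},\frac{2-\eta-\tilde\lambda_1}{\varepsilon_{\max}}\right)$; and $$ \mu\le\min\left\{\frac{1}{\sqrt{288\,s_0^{5/2}(2s_0^{3/2}+1)}},\ \frac{1}{\sqrt{\tfrac32 s_0^4+6s_0^{5/2}+2s_0}}\right\}. $$ Then $$ \lambda_1\big(X_{T_0\cup T_1}^tX_{T_0\cup T_1}\big)\le\tilde\lambda_1+3s_0\varepsilon_{\max}\quad\text{and}\quad \lambda_{s_0+s_1}\big(X_{T_0\cup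 T_1}^tX_{T_0\cup T_1}\big)\ge\tilde\lambda_{s_0}-3s_0\varepsilon_{\min}. $$
   Context: $\mu=\max_{k<l}|\langle X_k,X_l\rangle|$ is the coherence of $X$, $X_T$ the submatrix with columns indexed by $T$, and $\lambda_k(A)$ the $k$-th largest eigenvalue of a symmetric matrix $A$. *)

theory Defs
  imports "Jordan_Normal_Form.Char_Poly" "Jordan_Normal_Form.DL_Submatrix"
begin

(* X_T : the submatrix of X consisting of the columns indexed by T (0-based indices) *)
definition cols_sub :: "real mat \<Rightarrow> nat set \<Rightarrow> real mat" where
  "cols_sub X T = submatrix X UNIV T"

definition coherence :: "real mat \<Rightarrow> real" where
  "coherence X = Max {\<bar>col X k \<bullet> col X l\<bar> | k l. k < l \<and> l < dim_col X}"

(* list of eigenvalues (with multiplicity) of a matrix whose characteristic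
   polynomial splits over the reals (e.g. a real symmetric matrix), sorted decreasingly *)
definition eigvals_desc :: "real mat \<Rightarrow> real list" where
  "eigvals_desc A = rev (sort (SOME es. char_poly A = (\<Prod>a\<leftarrow>es. [:- a, 1:])))"

(* lambda_k(A): the k-th largest eigenvalue, k \<ge> 1 *)
definition eig_k :: "nat \<Rightarrow> real mat \<Rightarrow> real" where
  "eig_k k A = eigvals_desc A ! (k - 1)"

end

theory Submission imports Defs begin

text \<open>
  The columns of X indexed by T = T0 \<union> T1 (a set of 4 s0 indices) are unit vectors with pairwise
  inner products bounded by the coherence mu, so the Gram matrix of X_T is real symmetric with
  unit diagonal and off-diagonal entries at most mu in absolute value. By Gershgorin's disc theorem
  each of its eigenvalues lies within (4 s0 - 1) mu of 1. This already yields both bounds: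
  hypothesis (1) places the lower estimate below 1 - 4 s0 mu, and since the upper estimate is less
  than 3/2, the quantity epsilon_max is at least 18 mu, so 3 s0 epsilon_max exceeds the Gershgorin
  radius.
\<close>

lemma char_poly_root_eigenvector_rows:
  fixes A :: "'a :: field mat"
  assumes A: "A \<in> carrier_mat m m" and root: "poly (char_poly A) a = 0"
  obtains v where "v \<in> carrier_vec m" "\<exists>i<m. v $ i \<noteq> 0"
    "\<And>i. i < m \<Longrightarrow> (\<Sum>j<m. A $$ (i,j) * v $ j) = a * v $ i"
proof -
  from root eigenvalue_root_char_poly[OF A] obtain v where
    v: "v \<in> carrier_vec m" "v \<noteq> 0\<^sub>v m" "A *\<^sub>v v = a \<cdot>\<^sub>v v"
    unfolding eigenvalue_def eigenvector_def using A by auto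
  have rows: "(\<Sum>j<m. A $$ (i,j) * v $ j) = a * v $ i" if i: "i < m" for i
  proof -
    have "(A *\<^sub>v v) $ i = (a \<cdot>\<^sub>v v) $ i" using v(3) by simp
    then show ?thesis using i A v(1)
      by (simp add: scalar_prod_def lessThan_atLeast0 mult.commute)
  qed
  have nonzero: "\<exists>i<m. v $ i \<noteq> 0"
  proof (rule ccontr)
    assume "\<not> ?thesis"
    then have "v = 0\<^sub>v m" using v(1) by (intro eq_vecI) auto
    with v(2) show False by simp
  qed
  show ?thesis by (rule that[OF v(1) nonzero rows])
qed

lemma real_symmetric_char_poly_root_real:
  fixes A :: "real mat" and a :: complex
  assumes A: "A \<in> carrier_mat m m"
    and sym: "\<And>i j. i < m \<Longrightarrow> j < m \<Longrightarrow> A $$ (i,j) = A $$ (j,i)"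
    and root: "poly (char_poly (map_mat complex_of_real A)) a = 0"
  shows "Im a = 0"
proof -
  let ?B = "map_mat complex_of_real A"
  obtain v where v: "v \<in> carrier_vec m" "\<exists>i<m. v $ i \<noteq> 0"
    and rows: "\<And>i. i < m \<Longrightarrow> (\<Sum>j<m. ?B $$ (i,j) * v $ j) = a * v $ i"
    using char_poly_root_eigenvector_rows[of ?B m a] A root by auto
  have rows': "(\<Sum>j<m. complex_of_real (A $$ (i,j)) * v $ j) = a * v $ i" if "i < m" for i
    using rows[OF that] that A by simp
  \<comment> \<open>s is the Hermitian form of v: it equals a |v|^2 and, by symmetry of A, its own conjugate\<close>
  define N where "N = (\<Sum>i<m. cmod (v $ i)^2)"
  define s where "s = (\<Sum>i<m. \<Sum>j<m. cnj (v $ i) * (complex_of_real (A $$ (i,j)) * v $ j))"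
  have s_eq: "s = a * of_real N"
  proof -
    have "s = (\<Sum>i<m. cnj (v $ i) * (a * v $ i))"
      unfolding s_def by (rule sum.cong, simp, simp add: sum_distrib_left[symmetric] rows')
    also have "\<dots> = a * (\<Sum>i<m. of_real (cmod (v $ i)^2))"
      unfolding sum_distrib_left
      by (rule sum.cong[OF refl]) (metis complex_norm_square mult.commute mult.left_commute)
    finally show ?thesis unfolding N_def by simp
  qed
  have s_real: "cnj s = s"
  proof -
    have "cnj s = (\<Sum>i<m. \<Sum>j<m. v $ i * (complex_of_real (A $$ (i,j)) * cnj (v $ j)))"
      unfolding s_def by (simp add: cnj_sum)
    also have "\<dots> = (\<Sum>j<m. \<Sum>i<m. v $ i * (complex_of_real (A $$ (i,j)) * cnj (v $ j)))"
      by (rule sum.swap)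
    also have "\<dots> = s" unfolding s_def
      by (intro sum.cong refl, simp add: sym mult.commute mult.left_commute)
    finally show ?thesis .
  qed
  have "Im s = 0" using arg_cong[OF s_real, of Im] by simp
  moreover obtain i where "i < m" "v $ i \<noteq> 0" using v(2) by blast
  then have "N > 0" unfolding N_def by (intro sum_pos2[of _ i]) auto
  ultimately show ?thesis using s_eq by simp
qed

interpretation of_real_poly_hom: map_poly_comm_ring_hom "of_real :: real \<Rightarrow> complex" ..

lemma real_symmetric_char_poly_splits:
  fixes A :: "real mat"
  assumes A: "A \<in> carrier_mat m m"
    and sym: "\<And>i j. i < m \<Longrightarrow> j < m \<Longrightarrow> A $$ (i,j) = A $$ (j,i)"
  shows "\<exists>es. char_poly A = (\<Prod>a\<leftarrow>es. [:- a, 1:])"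
proof -
  let ?B = "map_mat complex_of_real A"
  obtain as where as: "char_poly ?B = (\<Prod>a\<leftarrow>as. [:- a, 1:])"
    using char_poly_factorized[of ?B m] A by auto
  have real_roots: "Im a = 0" if "a \<in> set as" for a
  proof (rule real_symmetric_char_poly_root_real[OF A sym])
    show "poly (char_poly ?B) a = 0" unfolding as using that by (induction as) auto
  qed
  define es where "es = map Re as"
  then have as_es: "as = map complex_of_real es"
    using real_roots
    by (intro nth_equalityI) (auto simp: complex_eq_iff)
  have "map_poly complex_of_real (char_poly A) = char_poly ?B"
    by (rule of_real_hom.char_poly_hom[OF A, symmetric])
  also have "\<dots> = (\<Prod>a\<leftarrow>map complex_of_real es. [:- a, 1:])"
    unfolding as as_es ..
  also have "\<dots> = map_poly complex_of_real (\<Prod>a\<leftarrow>es. [:- a, 1:])"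
    by (simp add: of_real_poly_hom.hom_prod_list o_def)
  finally have mapped:
    "map_poly complex_of_real (char_poly A) = map_poly complex_of_real (\<Prod>a\<leftarrow>es. [:- a, 1:])" .
  then have "char_poly A = (\<Prod>a\<leftarrow>es. [:- a, 1:])"
  proof (intro poly_eqI)
    fix i
    from arg_cong[OF mapped, of "\<lambda>p. coeff p i"]
    show "coeff (char_poly A) i = coeff (\<Prod>a\<leftarrow>es. [:- a, 1:]) i" by simp
  qed
  then show ?thesis by blast
qed

lemma eig_k_char_poly_root:
  fixes A :: "real mat"
  assumes A: "A \<in> carrier_mat m m"
    and splits: "\<exists>es. char_poly A = (\<Prod>a\<leftarrow>es. [:- a, 1:])"
    and k: "1 \<le> k" "k \<le> m"
  shows "poly (char_poly A) (eig_k k A) = 0"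
proof -
  define es where "es = (SOME es. char_poly A = (\<Prod>a\<leftarrow>es. [:- a, 1:]))"
  have es: "char_poly A = (\<Prod>a\<leftarrow>es. [:- a, 1:])"
    unfolding es_def using splits by (rule someI_ex)
  have "length es = m"
    using degree_monic_char_poly[OF A] degree_linear_factors[of uminus es] es by simp
  then have "k - 1 < length (eigvals_desc A)"
    using k unfolding eigvals_desc_def es_def[symmetric] by simp
  then have "eig_k k A \<in> set (eigvals_desc A)"
    unfolding eig_k_def by (rule nth_mem)
  then have "eig_k k A \<in> set es"
    unfolding eigvals_desc_def es_def[symmetric] by simp
  then show ?thesis unfolding es by (induction es) auto
qed

lemma gershgorin_disc:
  fixes A :: "real mat"
  assumes A: "A \<in> carrier_mat m m" and root: "poly (char_poly A) r = 0"
  obtains i where "i < m" "\<bar>r - A $$ (i,i)\<bar> \<le> (\<Sum>j\<in>{..<m} - {i}. \<bar>A $$ (i,j)\<bar>)"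
proof -
  obtain v where v: "v \<in> carrier_vec m" "\<exists>i<m. v $ i \<noteq> 0"
    and rows: "\<And>i. i < m \<Longrightarrow> (\<Sum>j<m. A $$ (i,j) * v $ j) = r * v $ i"
    using char_poly_root_eigenvector_rows[OF A root] by blast
  define M where "M = Max ((\<lambda>j. \<bar>v $ j\<bar>) ` {..<m})"
  have M_ge: "\<bar>v $ j\<bar> \<le> M" if "j < m" for j unfolding M_def using that by (intro Max_ge) auto
  have "M \<in> (\<lambda>j. \<bar>v $ j\<bar>) ` {..<m}" unfolding M_def using v(2) by (intro Max_in) auto
  then obtain i where i: "i < m" "\<bar>v $ i\<bar> = M" by auto
  have M_pos: "M > 0"
  proof -
    obtain i0 where "i0 < m" "v $ i0 \<noteq> 0" using v(2) by blast
    then show ?thesis using M_ge[of i0] by linarith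
  qed
  have "(\<Sum>j<m. A $$ (i,j) * v $ j) = A $$ (i,i) * v $ i + (\<Sum>j\<in>{..<m} - {i}. A $$ (i,j) * v $ j)"
    using i(1) by (simp add: sum.remove)
  then have row_eq: "(r - A $$ (i,i)) * v $ i = (\<Sum>j\<in>{..<m} - {i}. A $$ (i,j) * v $ j)"
    using rows[OF i(1)] by (simp add: algebra_simps)
  have "\<bar>r - A $$ (i,i)\<bar> * M = \<bar>\<Sum>j\<in>{..<m} - {i}. A $$ (i,j) * v $ j\<bar>"
    using arg_cong[OF row_eq, of abs] i(2) by (simp add: abs_mult)
  also have "\<dots> \<le> (\<Sum>j\<in>{..<m} - {i}. \<bar>A $$ (i,j)\<bar> * \<bar>v $ j\<bar>)"
    by (rule order_trans[OF sum_abs]) (simp add: abs_mult)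
  also have "\<dots> \<le> (\<Sum>j\<in>{..<m} - {i}. \<bar>A $$ (i,j)\<bar>) * M"
    unfolding sum_distrib_right using M_ge by (intro sum_mono mult_left_mono) auto
  finally have "\<bar>r - A $$ (i,i)\<bar> * M \<le> (\<Sum>j\<in>{..<m} - {i}. \<bar>A $$ (i,j)\<bar>) * M" .
  then have "\<bar>r - A $$ (i,i)\<bar> \<le> (\<Sum>j\<in>{..<m} - {i}. \<bar>A $$ (i,j)\<bar>)"
    using M_pos by simp
  with i(1) show ?thesis by (rule that)
qed

lemma unit_diagonal_eigenvalue_bound:
  fixes A :: "real mat"
  assumes A: "A \<in> carrier_mat m m"
    and diag: "\<And>i. i < m \<Longrightarrow> A $$ (i,i) = 1"
    and off: "\<And>i j. i < m \<Longrightarrow> j < m \<Longrightarrow> i \<noteq> j \<Longrightarrow> \<bar>A $$ (i,j)\<bar> \<le> \<mu>"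
    and root: "poly (char_poly A) r = 0"
  shows "\<bar>r - 1\<bar> \<le> real (m - 1) * \<mu>"
proof -
  obtain i where i: "i < m" and disc: "\<bar>r - A $$ (i,i)\<bar> \<le> (\<Sum>j\<in>{..<m} - {i}. \<bar>A $$ (i,j)\<bar>)"
    using gershgorin_disc[OF A root] by blast
  have "\<bar>r - 1\<bar> = \<bar>r - A $$ (i,i)\<bar>" using diag[OF i] by simp
  also note disc
  also have "(\<Sum>j\<in>{..<m} - {i}. \<bar>A $$ (i,j)\<bar>) \<le> (\<Sum>j\<in>{..<m} - {i}. \<mu>)"
    using off i by (intro sum_mono) auto
  also have "\<dots> = real (m - 1) * \<mu>" using i by simp
  finally show ?thesis .
qed

lemma col_submatrix_UNIV:
  assumes "j < card {j. j < dim_col A \<and> j \<in> J}"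
  shows "col (submatrix A UNIV J) j = col A (pick J j)"
proof (rule eq_vecI)
  show "dim_vec (col (submatrix A UNIV J) j) = dim_vec (col A (pick J j))"
    by (simp add: dim_submatrix)
  fix i assume "i < dim_vec (col A (pick J j))"
  then show "col (submatrix A UNIV J) j $ i = col A (pick J j) $ i"
    using assms pick_le[OF assms] by (simp add: dim_submatrix submatrix_index pick_UNIV)
qed

lemma coherence_bound:
  assumes "a < dim_col X" "b < dim_col X" "a \<noteq> b"
  shows "\<bar>col X a \<bullet> col X b\<bar> \<le> coherence X"
proof -
  let ?S = "{\<bar>col X k \<bullet> col X l\<bar> | k l. k < l \<and> l < dim_col X}"
  have "?S \<subseteq> (\<lambda>(k,l). \<bar>col X k \<bullet> col X l\<bar>) ` ({..<dim_col X} \<times> {..<dim_col X})"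
    by auto
  then have fin: "finite ?S" by (rule finite_subset) auto
  have comm: "col X a \<bullet> col X b = col X b \<bullet> col X a"
    by (rule comm_scalar_prod[of _ "dim_row X"]) auto
  have "\<exists>k l. \<bar>col X a \<bullet> col X b\<bar> = \<bar>col X k \<bullet> col X l\<bar> \<and> k < l \<and> l < dim_col X"
  proof (cases "a < b")
    case True
    then show ?thesis using assms by blast
  next
    case False
    then show ?thesis using assms comm by (intro exI[of _ b] exI[of _ a]) auto
  qed
  then have "\<bar>col X a \<bullet> col X b\<bar> \<in> ?S" by blast
  then show ?thesis unfolding coherence_def using fin by simp
qed

lemma eig_k_gram_cols_sub_near_one:
  fixes X :: "real mat"
  assumes unit_cols: "\<And>j. j < dim_col X \<Longrightarrow> col X j \<bullet> col X j = 1"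
    and T: "T \<subseteq> {..<dim_col X}" and k: "1 \<le> k" "k \<le> card T"
  shows "\<bar>eig_k k ((cols_sub X T)\<^sup>T * cols_sub X T) - 1\<bar> \<le> real (card T - 1) * coherence X"
proof -
  define m where "m = card T"
  define G where "G = (cols_sub X T)\<^sup>T * cols_sub X T"
  have card_T: "card {j. j < dim_col X \<and> j \<in> T} = m"
    unfolding m_def using T by (metis (no_types, lifting) Collect_mem_eq Collect_cong lessThan_iff subsetD)
  have pick_col: "pick T j < dim_col X" if "j < m" for j
    using pick_in_set[of j T] that T unfolding m_def by auto
  have pick_inj: "pick T i \<noteq> pick T j" if "i < m" "j < m" "i \<noteq> j" for i j
    using that pick_mono[of i T j] pick_mono[of j T i] unfolding m_def
    by (cases "i < j") auto
  have G: "G \<in> carrier_mat m m"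
    unfolding G_def cols_sub_def using card_T by (intro carrier_matI) (simp_all add: dim_submatrix)
  have G_entry: "G $$ (i,j) = col X (pick T i) \<bullet> col X (pick T j)" if "i < m" "j < m" for i j
    using that card_T col_submatrix_UNIV[of i X T] col_submatrix_UNIV[of j X T]
    unfolding G_def cols_sub_def by (simp add: dim_submatrix)
  have comm: "col X a \<bullet> col X b = col X b \<bullet> col X a" for a b
    by (rule comm_scalar_prod[of _ "dim_row X"]) auto
  have "\<bar>eig_k k G - 1\<bar> \<le> real (m - 1) * coherence X"
  proof (rule unit_diagonal_eigenvalue_bound[OF G])
    show "G $$ (i,i) = 1" if "i < m" for i
      using G_entry[OF that that] unit_cols pick_col[OF that] by simp
    show "\<bar>G $$ (i,j)\<bar> \<le> coherence X" if "i < m" "j < m" "i \<noteq> j" for i j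
      using G_entry[OF that(1,2)] coherence_bound pick_col pick_inj that by simp
    have "G $$ (i,j) = G $$ (j,i)" if "i < m" "j < m" for i j
      using G_entry that comm by simp
    then have "\<exists>es. char_poly G = (\<Prod>a\<leftarrow>es. [:- a, 1:])"
      by (rule real_symmetric_char_poly_splits[OF G])
    then show "poly (char_poly G) (eig_k k G) = 0"
      using eig_k_char_poly_root[OF G] k unfolding m_def by blast
  qed
  then show ?thesis unfolding G_def m_def .
qed

lemma coherence_radius_le_upper_margin:
  fixes s \<mu> t :: real
  assumes s: "1 \<le> s" and \<mu>: "0 \<le> \<mu>" and t: "1 < t" "t < 2"
  shows "1 + (4 * s - 1) * \<mu>
    \<le> t + 3 * s * (1/4 * ((144 * s ^ 4 * \<mu>^2 + 32 * s powr (3/2) * \<mu> * (2 - 1/2)^2) / (t - 1)))"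
proof -
  define q where "q = 144 * s ^ 4 * \<mu>^2 + 32 * s powr (3/2) * \<mu> * (2 - 1/2)^2"
  have "\<mu> \<le> s powr (3/2) * \<mu>"
    using s \<mu> by (simp add: ge_one_powr_ge_zero mult_le_cancel_right1)
  moreover have "32 * s powr (3/2) * \<mu> * (2 - 1/2)^2 = 72 * (s powr (3/2) * \<mu>)"
    by (simp add: power2_eq_square)
  moreover have "0 \<le> 144 * s ^ 4 * \<mu>^2" by simp
  ultimately have "72 * \<mu> \<le> q" unfolding q_def by linarith
  also have "q \<le> q / (t - 1)"
    using t calculation \<mu> by (simp add: le_divide_eq mult_left_le)
  finally have "18 * \<mu> \<le> 1/4 * (q / (t - 1))" by linarith
  then have "3 * s * (18 * \<mu>) \<le> 3 * s * (1/4 * (q / (t - 1)))"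
    by (rule mult_left_mono) (use s in simp)
  moreover have "(4 * s - 1) * \<mu> \<le> 3 * s * (18 * \<mu>)"
    using mult_right_mono[of "4 * s - 1" "54 * s" \<mu>] s \<mu> by simp
  ultimately show ?thesis unfolding q_def[symmetric] using t by linarith
qed

lemma divisor_pos_of_lt_quotient:
  fixes x a e :: real
  assumes "0 \<le> x" "x < a / e" "0 < a"
  shows "0 < e"
proof (rule ccontr)
  assume "\<not> 0 < e"
  then have "a / e \<le> 0" using \<open>0 < a\<close> by (simp add: divide_nonneg_nonpos)
  with assms(1,2) show False by linarith
qed

theorem mainTheorem5:
  fixes X :: "real mat" and n p s0 s1 :: nat and T0 T1 :: "nat set"
    and lt1 lts0 \<eta> \<epsilon>min \<epsilon>max \<mu> :: real
  assumes X_dim: "X \<in> carrier_mat n p"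
    and unit_cols: "\<And>j. j < p \<Longrightarrow> col X j \<bullet> col X j = 1"
    and mu_def: "\<mu> = coherence X"
    and T0: "T0 \<subseteq> {0..<p}" "card T0 = s0" "s0 \<ge> 1"
    and lt1: "lt1 \<ge> eig_k 1 (cols_sub X T0 * (cols_sub X T0)\<^sup>T)"
    and lts0: "lts0 \<le> eig_k s0 (cols_sub X T0 * (cols_sub X T0)\<^sup>T)"
    and T1: "T1 \<subseteq> {0..<p}" "card T1 = s1" "s1 = 3 * s0" "T0 \<inter> T1 = {}"
    and eta: "\<eta> = 1/2"
    and emin: "\<epsilon>min = 1/4 * ((real s0 ^ 3 * \<mu>^2 / 4 + real s0 powr (3/2) * \<mu>)
                              / (1 - real s0 * \<mu>^2 - 1/2))"
    and emax: "\<epsilon>max = 1/4 * ((144 * real s0 ^ 4 * \<mu>^2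
                              + 32 * real s0 powr (3/2) * \<mu> * (2 - \<eta>)^2) / (lt1 - 1))"
    and c1: "1 - real (s0 + s1) * \<mu> > lts0" "lts0 > \<eta>"
    and c2: "1 < lt1" "lt1 < 2 - \<eta>"
    and c3: "real s1 < min ((lts0 - \<eta>) / \<epsilon>min) ((2 - \<eta> - lt1) / \<epsilon>max)"
    and c4: "\<mu> \<le> min (1 / sqrt (288 * real s0 powr (5/2) * (2 * real s0 powr (3/2) + 1)))
                       (1 / sqrt (3/2 * real s0 ^ 4 + 6 * real s0 powr (5/2) + 2 * real s0))"
  shows "eig_k 1 ((cols_sub X (T0 \<union> T1))\<^sup>T * cols_sub X (T0 \<union> T1)) \<le> lt1 + 3 * real s0 * \<epsilon>max
       \<and> eig_k (s0 + s1) ((cols_sub X (T0 \<union> T1))\<^sup>T * cols_sub X (T0 \<union> T1)) \<ge> lts0 - 3 * real s0 * \<epsilon>min"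
proof -
  define T where "T = T0 \<union> T1"
  have p: "dim_col X = p" using X_dim by simp
  have T: "T \<subseteq> {..<dim_col X}" using T0(1) T1(1) p unfolding T_def by auto
  have card_T: "card T = 4 * s0"
    using T0 T1 finite_subset[OF T0(1)] finite_subset[OF T1(1)] unfolding T_def
    by (simp add: card_Un_disjoint)
  have "card T \<le> p" using card_mono[OF _ T] p by simp
  then have \<mu>_nonneg: "0 \<le> \<mu>"
    using coherence_bound[of 0 X 1] p T0(3) card_T mu_def by simp
  have near_one: "\<bar>eig_k k ((cols_sub X T)\<^sup>T * cols_sub X T) - 1\<bar> \<le> (4 * real s0 - 1) * \<mu>"
    if "1 \<le> k" "k \<le> 4 * s0" for k
    using eig_k_gram_cols_sub_near_one[OF _ T, of k] unit_cols p that card_T T0(3) mu_def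
    by (simp add: of_nat_diff)
  have "s0 + s1 \<le> 4 * s0" using T1(3) by simp
  then have "1 - (4 * real s0 - 1) * \<mu> \<le> eig_k (s0 + s1) ((cols_sub X T)\<^sup>T * cols_sub X T)"
    using near_one[of "s0 + s1"] T0(3) by (simp add: abs_le_iff)
  moreover have "lts0 - 3 * real s0 * \<epsilon>min \<le> 1 - (4 * real s0 - 1) * \<mu>"
  proof -
    have "real s1 < (lts0 - \<eta>) / \<epsilon>min" using c3 by simp
    then have "\<epsilon>min > 0" by (rule divisor_pos_of_lt_quotient[rotated]) (use c1(2) in simp_all)
    then have "0 \<le> 3 * real s0 * \<epsilon>min" by simp
    moreover have "lts0 < 1 - 4 * real s0 * \<mu>" using c1(1) T1(3) by (simp add: algebra_simps)
    moreover have "(4 * real s0 - 1) * \<mu> = 4 * real s0 * \<mu> - \<mu>" by (simp add: algebra_simps)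
    ultimately show ?thesis using \<mu>_nonneg by linarith
  qed
  moreover have "eig_k 1 ((cols_sub X T)\<^sup>T * cols_sub X T) \<le> 1 + (4 * real s0 - 1) * \<mu>"
    using near_one[of 1] T0(3) by (simp add: abs_le_iff)
  moreover have "1 + (4 * real s0 - 1) * \<mu> \<le> lt1 + 3 * real s0 * \<epsilon>max"
    unfolding emax eta using coherence_radius_le_upper_margin \<mu>_nonneg T0(3) c2 eta by simp
  ultimately show ?thesis unfolding T_def by linarith
qed

end
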